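(* Let $\Lambda$ be a $k$-graph with no sources, $S$ a semigroup, $\eta:\Lambda\to S$ a functor and $\Lambda\times_\eta S$ the associated skew product graph. Then the system $(\Lambda,S,\eta)$ is cofinal if and only if $\Lambda\times_\eta S$ is cofinal.
   Context: All semigroups are countable, cancellative, with identity. A $k$-graph is a countable category $\Lambda$ with a functor $d:\Lambda\to\mathbb{N}^k$ with unique factorisation; $\Lambda^n=d^{-1}(n)$, $\Lambda^0$ = vertices, $uXv=\{\lambda\in X:r(\lambda)=u,s(\lambda)=v\}$; no sources: $v\Lambda^n\ne\emptyset$ for $n\ne0$. The skew product $\Lambda\times_\eta S$ has vertices $\Lambda^0\times S$, morphisms $\Lambda\times S$, $r(\lambda,t)=(r(\lambda),t)$, $s(\lambda,t)=(s(\lambda),t\eta(\lambda))$, $(\lambda,t)(\mu,t\eta(\lambda))=(\lambda\mu,t)$, $d(\lambda,t)=d(\lambda)$. A $k$-graph $\Gamma$ is cofinal if for all $v,w\in\Gamma^0$ there is $N\in\mathbb{N}^k$ with $v\Gamma s(\alpha)\ne\emptyset$ for all $\alpha\in w\Gamma^N$. The system $(\Lambda,S,\eta)$ is cofinal if for all $v,w\in\Lambda^0$ and $a,b\in S$ there is $N\in\mathbb{N}^k$ such that for all $\alpha\in w\Lambda^N$ there is $\beta\in v\Lambda s(\alpha)$ with $a\eta(\beta)=b\eta(\alpha)$. *)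

theory Defs
  imports Main "HOL-Library.Countable_Set" "HOL-Library.Function_Algebras"
begin

text \<open>Degrees in N^k are represented as functions nat => nat vanishing at indices >= k.
  Vertices are identified with the identity morphisms, i.e. Lambda^0 = d^{-1}(0).\<close>

definition degs :: "nat \<Rightarrow> (nat \<Rightarrow> nat) set" where
  "degs k = {n. \<forall>i\<ge>k. n i = 0}"

record 'm kgraph =
  Mor :: "'m set"
  rng :: "'m \<Rightarrow> 'm"
  src :: "'m \<Rightarrow> 'm"
  cmp :: "'m \<Rightarrow> 'm \<Rightarrow> 'm"
  deg :: "'m \<Rightarrow> nat \<Rightarrow> nat"

definition verts :: "'m kgraph \<Rightarrow> 'm set" where
  "verts G = {v \<in> Mor G. deg G v = 0}"

definition is_kgraph :: "nat \<Rightarrow> 'm kgraph \<Rightarrow> bool" where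
  "is_kgraph k G \<longleftrightarrow>
     countable (Mor G) \<and>
     (\<forall>l\<in>Mor G. rng G l \<in> Mor G \<and> src G l \<in> Mor G \<and>
        rng G (rng G l) = rng G l \<and> src G (rng G l) = rng G l \<and>
        rng G (src G l) = src G l \<and> src G (src G l) = src G l) \<and>
     (\<forall>l\<in>Mor G. \<forall>m\<in>Mor G. src G l = rng G m \<longrightarrow>
        cmp G l m \<in> Mor G \<and> rng G (cmp G l m) = rng G l \<and> src G (cmp G l m) = src G m) \<and>
     (\<forall>l\<in>Mor G. \<forall>m\<in>Mor G. \<forall>n\<in>Mor G. src G l = rng G m \<and> src G m = rng G n \<longrightarrow>
        cmp G (cmp G l m) n = cmp G l (cmp G m n)) \<and>
     (\<forall>l\<in>Mor G. cmp G (rng G l) l = l \<and> cmp G l (src G l) = l) \<and>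
     (\<forall>l\<in>Mor G. deg G l \<in> degs k) \<and>
     (\<forall>l\<in>Mor G. \<forall>m\<in>Mor G. src G l = rng G m \<longrightarrow>
        deg G (cmp G l m) = deg G l + deg G m) \<and>
     (\<forall>l\<in>Mor G. \<forall>p q. deg G l = p + q \<longrightarrow>
        (\<exists>!(a, b). a \<in> Mor G \<and> b \<in> Mor G \<and> src G a = rng G b \<and>
            deg G a = p \<and> deg G b = q \<and> cmp G a b = l))"

definition no_sources :: "nat \<Rightarrow> 'm kgraph \<Rightarrow> bool" where
  "no_sources k G \<longleftrightarrow> (\<forall>v\<in>verts G. \<forall>n\<in>degs k. n \<noteq> 0 \<longrightarrow>
     (\<exists>l\<in>Mor G. rng G l = v \<and> deg G l = n))"

definition kgraph_cofinal :: "nat \<Rightarrow> 'm kgraph \<Rightarrow> bool" where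
  "kgraph_cofinal k G \<longleftrightarrow> (\<forall>v\<in>verts G. \<forall>w\<in>verts G. \<exists>N\<in>degs k.
     \<forall>a\<in>Mor G. rng G a = w \<and> deg G a = N \<longrightarrow>
       (\<exists>l\<in>Mor G. rng G l = v \<and> src G l = src G a))"

definition is_functor_to_monoid :: "'m kgraph \<Rightarrow> ('m \<Rightarrow> 's::monoid_mult) \<Rightarrow> bool" where
  "is_functor_to_monoid G eta \<longleftrightarrow>
     (\<forall>v\<in>verts G. eta v = 1) \<and>
     (\<forall>l\<in>Mor G. \<forall>m\<in>Mor G. src G l = rng G m \<longrightarrow> eta (cmp G l m) = eta l * eta m)"

text \<open>countable cancellative semigroup with identity, given as the whole type 's\<close>
definition cancellative_countable_monoid :: "'s::monoid_mult itself \<Rightarrow> bool" where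
  "cancellative_countable_monoid _ \<longleftrightarrow> countable (UNIV :: 's set) \<and>
     (\<forall>a b c::'s. a * b = a * c \<longrightarrow> b = c) \<and> (\<forall>a b c::'s. b * a = c * a \<longrightarrow> b = c)"

definition skew_product :: "'m kgraph \<Rightarrow> ('m \<Rightarrow> 's::monoid_mult) \<Rightarrow> ('m \<times> 's) kgraph" where
  "skew_product G eta =
     \<lparr> Mor = Mor G \<times> UNIV,
       rng = (\<lambda>(l, t). (rng G l, t)),
       src = (\<lambda>(l, t). (src G l, t * eta l)),
       cmp = (\<lambda>(l, t) (m, t'). (cmp G l m, t)),
       deg = (\<lambda>(l, t). deg G l) \<rparr>"

definition system_cofinal :: "nat \<Rightarrow> 'm kgraph \<Rightarrow> ('m \<Rightarrow> 's::monoid_mult) \<Rightarrow> bool" where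
  "system_cofinal k G eta \<longleftrightarrow> (\<forall>v\<in>verts G. \<forall>w\<in>verts G. \<forall>a b::'s. \<exists>N\<in>degs k.
     \<forall>al\<in>Mor G. rng G al = w \<and> deg G al = N \<longrightarrow>
       (\<exists>be\<in>Mor G. rng G be = v \<and> src G be = src G al \<and> a * eta be = b * eta al))"

end

theory Submission
  imports Defs
begin

text \<open>A path of degree N in the skew product starting at (w, b) is a pair (al, b) with al
  a path of degree N in the graph, and it ends at (src al, b * eta al). Hence a path
  (be, a) from (v, a) reaching the same vertex is exactly a path be from v to src al with
  a * eta be = b * eta al, so cofinality of the skew product is the cofinality condition
  of the system read off vertex by vertex; no property of the graph or of S is needed.\<close>

lemma skew_product_simps [simp]:
  "Mor (skew_product G eta) = Mor G \<times> UNIV"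
  "rng (skew_product G eta) (l, t) = (rng G l, t)"
  "src (skew_product G eta) (l, t) = (src G l, t * eta l)"
  "deg (skew_product G eta) (l, t) = deg G l"
  by (simp_all add: skew_product_def)

lemma verts_skew_product: "verts (skew_product G eta) = verts G \<times> UNIV"
  by (auto simp: verts_def)

lemma skew_product_cofinal_at_iff:
  "(\<forall>x\<in>Mor (skew_product G eta).
       rng (skew_product G eta) x = (w, b) \<and> deg (skew_product G eta) x = N \<longrightarrow>
       (\<exists>l\<in>Mor (skew_product G eta). rng (skew_product G eta) l = (v, a) \<and>
          src (skew_product G eta) l = src (skew_product G eta) x))
   \<longleftrightarrow> (\<forall>al\<in>Mor G. rng G al = w \<and> deg G al = N \<longrightarrow>
       (\<exists>be\<in>Mor G. rng G be = v \<and> src G be = src G al \<and> a * eta be = b * eta al))"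
  by fastforce

lemma kgraph_cofinal_skew_product_iff:
  "kgraph_cofinal k (skew_product G eta) \<longleftrightarrow> system_cofinal k G eta"
  unfolding kgraph_cofinal_def system_cofinal_def verts_skew_product Ball_def
  by (simp only: mem_Times_iff split_paired_All fst_conv snd_conv
      skew_product_cofinal_at_iff [simplified Ball_def]) auto

theorem proposition4p11:
  fixes k :: nat and G :: "'m kgraph" and eta :: "'m \<Rightarrow> 's::monoid_mult"
  assumes "is_kgraph k G"
    and "no_sources k G"
    and "cancellative_countable_monoid TYPE('s)"
    and "is_functor_to_monoid G eta"
  shows "system_cofinal k G eta \<longleftrightarrow> kgraph_cofinal k (skew_product G eta)"
  by (simp add: kgraph_cofinal_skew_product_iff)

end
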